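(* Let $t\geq 2$, $n\geq 1$ be integers and let $P$ be a finite poset with the unique cover twin property (UCTP) having at least three elements. If $\mathcal{F}\subseteq[t]^n$ is induced $P$-saturated, then every coordinate $i\in[n]$ is separating for $\mathcal{F}$.
   Context: For positive integers $n,t$, $[n]=\{1,\dots,n\}$ and $[t]^n$ is the set of functions $f:[n]\to[t]$, partially ordered by $f\leq g$ iff $f(i)\leq g(i)$ for all $i$. An induced copy of $P$ in $\mathcal{F}\subseteq[t]^n$ is an injective map $\phi:P\to\mathcal{F}$ with $\phi(x)\leq\phi(y)$ iff $x\leq_P y$. $\mathcal{F}$ is induced $P$-free if it contains no induced copy of $P$, and induced $P$-saturated if it is induced $P$-free and for every $f\in[t]^n\setminus\mathcal{F}$, $\mathcal{F}\cup\{f\}$ contains an induced copy of $P$. For $f\in[t]^n$, $D_i(f)\in[t]^{n-1}$ is obtained by deleting coordinate $i$: $D_i(f)(x)=f(x)$ for $x<i$, $D_i(f)(x)=f(x+1)$ for $i\leq x\leq n-1$. Coordinate $i$ is separating for $\mathcal{F}$ if there exist distinct $f,f'\in\mathcal{F}$ with $D_i(f)\leq D_i(f')$ and $f(i)>f'(i)$. In a poset $P$, $x$ covers $y\neq x$ if $y\leq_P x$ and no $z\in P\setminus\{x,y\}$ satisfies $y\leq_P z\leq_P x$. $P$ has the UCTP if whenever $x$ covers $y$, there exists $y'\in P\setminus\{x,y\}$ such that $x$ covers $y'$. *)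

theory Defs
  imports Main
begin

text \<open>Elements of [t]^n are represented as functions nat \<Rightarrow> nat with values in {1..t}
  on {1..n} and value 0 outside {1..n} (canonical representation).\<close>

definition grid :: "nat \<Rightarrow> nat \<Rightarrow> (nat \<Rightarrow> nat) set" where
  "grid t n = {f. (\<forall>x\<in>{1..n}. 1 \<le> f x \<and> f x \<le> t) \<and> (\<forall>x. x \<notin> {1..n} \<longrightarrow> f x = 0)}"

definition gle :: "nat \<Rightarrow> (nat \<Rightarrow> nat) \<Rightarrow> (nat \<Rightarrow> nat) \<Rightarrow> bool" where
  "gle n f g \<longleftrightarrow> (\<forall>i\<in>{1..n}. f i \<le> g i)"

definition is_poset :: "'a set \<Rightarrow> ('a \<Rightarrow> 'a \<Rightarrow> bool) \<Rightarrow> bool" where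
  "is_poset P le \<longleftrightarrow> (\<forall>x\<in>P. le x x) \<and>
     (\<forall>x\<in>P. \<forall>y\<in>P. le x y \<and> le y x \<longrightarrow> x = y) \<and>
     (\<forall>x\<in>P. \<forall>y\<in>P. \<forall>z\<in>P. le x y \<and> le y z \<longrightarrow> le x z)"

definition induced_copy ::
  "'a set \<Rightarrow> ('a \<Rightarrow> 'a \<Rightarrow> bool) \<Rightarrow> nat \<Rightarrow> (nat \<Rightarrow> nat) set \<Rightarrow> ('a \<Rightarrow> nat \<Rightarrow> nat) \<Rightarrow> bool" where
  "induced_copy P le n F \<phi> \<longleftrightarrow> inj_on \<phi> P \<and> \<phi> ` P \<subseteq> F \<and>
     (\<forall>x\<in>P. \<forall>y\<in>P. gle n (\<phi> x) (\<phi> y) \<longleftrightarrow> le x y)"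

definition induced_free ::
  "'a set \<Rightarrow> ('a \<Rightarrow> 'a \<Rightarrow> bool) \<Rightarrow> nat \<Rightarrow> (nat \<Rightarrow> nat) set \<Rightarrow> bool" where
  "induced_free P le n F \<longleftrightarrow> \<not> (\<exists>\<phi>. induced_copy P le n F \<phi>)"

definition induced_saturated ::
  "'a set \<Rightarrow> ('a \<Rightarrow> 'a \<Rightarrow> bool) \<Rightarrow> nat \<Rightarrow> nat \<Rightarrow> (nat \<Rightarrow> nat) set \<Rightarrow> bool" where
  "induced_saturated P le t n F \<longleftrightarrow> F \<subseteq> grid t n \<and> induced_free P le n F \<and>
     (\<forall>f \<in> grid t n - F. \<not> induced_free P le n (F \<union> {f}))"

definition del_coord :: "nat \<Rightarrow> nat \<Rightarrow> (nat \<Rightarrow> nat) \<Rightarrow> (nat \<Rightarrow> nat)" where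
  "del_coord n i f = (\<lambda>x. if 1 \<le> x \<and> x < i then f x
                          else if i \<le> x \<and> x \<le> n - 1 \<and> 1 \<le> x then f (x + 1) else 0)"

definition separating :: "nat \<Rightarrow> (nat \<Rightarrow> nat) set \<Rightarrow> nat \<Rightarrow> bool" where
  "separating n F i \<longleftrightarrow> (\<exists>f\<in>F. \<exists>f'\<in>F. f \<noteq> f' \<and>
     gle (n - 1) (del_coord n i f) (del_coord n i f') \<and> f i > f' i)"

definition covers :: "'a set \<Rightarrow> ('a \<Rightarrow> 'a \<Rightarrow> bool) \<Rightarrow> 'a \<Rightarrow> 'a \<Rightarrow> bool" where
  "covers P le x y \<longleftrightarrow> x \<in> P \<and> y \<in> P \<and> y \<noteq> x \<and> le y x \<and>
     \<not> (\<exists>z \<in> P - {x, y}. le y z \<and> le z x)"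

definition UCTP :: "'a set \<Rightarrow> ('a \<Rightarrow> 'a \<Rightarrow> bool) \<Rightarrow> bool" where
  "UCTP P le \<longleftrightarrow> (\<forall>x\<in>P. \<forall>y\<in>P. covers P le x y \<longrightarrow> (\<exists>y'\<in>P - {x, y}. covers P le x y'))"

end

theory Submission
  imports Defs
begin

(* Suppose coordinate i does not separate F. Choose f in F extremal among the members of F with
   the same i-th coordinate, and change that coordinate to a neighbouring value c, obtaining
   g = f(i := c) outside F. Because deleting coordinate i does not separate F, every other member
   of F is related to g exactly as it is to f. By saturation, adding g to F creates an induced copy
   of P through g. If the copy avoids f, replacing g by f gives a copy inside F; otherwise the
   preimages of f and g are two comparable elements of P with the same down-sets, which the UCTP
   forbids. *)

lemma gle_refl: "gle n f f"
  by (simp add: gle_def)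

lemma gle_iff_del_coord:
  assumes i: "i \<in> {1..n}"
  shows "gle n f h \<longleftrightarrow> gle (n - 1) (del_coord n i f) (del_coord n i h) \<and> f i \<le> h i"
proof
  assume "gle n f h"
  then show "gle (n - 1) (del_coord n i f) (del_coord n i h) \<and> f i \<le> h i"
    using i by (auto simp: gle_def del_coord_def)
next
  assume H: "gle (n - 1) (del_coord n i f) (del_coord n i h) \<and> f i \<le> h i"
  show "gle n f h" unfolding gle_def
  proof
    fix j assume j: "j \<in> {1..n}"
    consider "j < i" | "j = i" | "i < j" by linarith
    then show "f j \<le> h j"
    proof cases
      case 1
      then have "del_coord n i f j \<le> del_coord n i h j" using H i j by (auto simp: gle_def)
      then show ?thesis using 1 j by (simp add: del_coord_def)
    next
      case 2
      then show ?thesis using H by simp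
    next
      case 3
      then obtain k where k: "j = Suc k" "i \<le> k" "1 \<le> k" "k \<le> n - 1" using i j by (cases j) auto
      then have "del_coord n i f k \<le> del_coord n i h k" using H by (auto simp: gle_def)
      then show ?thesis using k by (simp add: del_coord_def)
    qed
  qed
qed

lemma del_coord_fun_upd:
  assumes "i \<in> {1..n}"
  shows "del_coord n i (f(i := c)) = del_coord n i f"
  using assms by (auto simp: del_coord_def fun_eq_iff)

lemma fun_upd_in_grid:
  assumes "f \<in> grid t n" "i \<in> {1..n}" "1 \<le> c" "c \<le> t"
  shows "f(i := c) \<in> grid t n"
  using assms by (auto simp: grid_def)

lemma gle_fun_upd_comparable: "gle n f (f(i := c)) \<or> gle n (f(i := c)) f"
  by (cases "f i \<le> c") (auto simp: gle_def)

lemma grid_sum_strict_mono: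
  assumes "f \<in> grid t n" "h \<in> grid t n" "gle n h f" "h \<noteq> f"
  shows "(\<Sum>j\<in>{1..n}. h j) < (\<Sum>j\<in>{1..n}. f j)"
proof (rule sum_strict_mono_ex1)
  show "\<forall>j\<in>{1..n}. h j \<le> f j" using assms(3) by (simp add: gle_def)
  obtain j where j: "h j \<noteq> f j" using assms(4) by blast
  have "j \<in> {1..n}"
  proof (rule ccontr)
    assume "j \<notin> {1..n}"
    then have "h j = 0" "f j = 0" using assms(1,2) by (simp_all add: grid_def)
    with j show False by simp
  qed
  with j \<open>\<forall>j\<in>{1..n}. h j \<le> f j\<close> show "\<exists>j\<in>{1..n}. h j < f j"
    using le_neq_implies_less by blast
qed simp

lemma grid_has_maximal:
  assumes "S \<subseteq> grid t n" "f\<^sub>0 \<in> S"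
  obtains f where "f \<in> S" "\<And>h. h \<in> S \<Longrightarrow> gle n f h \<Longrightarrow> h = f"
proof -
  have "\<forall>h. h \<in> S \<longrightarrow> (\<Sum>j\<in>{1..n}. h j) < n * t + 1"
  proof (intro allI impI)
    fix h assume "h \<in> S"
    then have "(\<Sum>j\<in>{1..n}. h j) \<le> (\<Sum>j\<in>{1..n}. t)"
      using assms(1) by (intro sum_mono) (auto simp: grid_def)
    then show "(\<Sum>j\<in>{1..n}. h j) < n * t + 1" by simp
  qed
  then obtain f where f: "f \<in> S"
    and max: "\<And>h. h \<in> S \<Longrightarrow> (\<Sum>j\<in>{1..n}. h j) \<le> (\<Sum>j\<in>{1..n}. f j)"
    using ex_has_greatest_nat[of "\<lambda>h. h \<in> S" f\<^sub>0 "\<lambda>h. \<Sum>j\<in>{1..n}. h j"] assms(2) by metis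
  show thesis
  proof (rule that[OF f])
    fix h assume h: "h \<in> S" "gle n f h"
    show "h = f"
    proof (rule ccontr)
      assume "h \<noteq> f"
      then have "(\<Sum>j\<in>{1..n}. f j) < (\<Sum>j\<in>{1..n}. h j)"
        using assms(1) h f by (intro grid_sum_strict_mono) auto
      then show False using max[OF h(1)] by simp
    qed
  qed
qed

lemma grid_has_minimal:
  assumes "S \<subseteq> grid t n" "f\<^sub>0 \<in> S"
  obtains f where "f \<in> S" "\<And>h. h \<in> S \<Longrightarrow> gle n h f \<Longrightarrow> h = f"
proof -
  obtain f where f: "f \<in> S"
    and min: "\<And>h. h \<in> S \<Longrightarrow> (\<Sum>j\<in>{1..n}. f j) \<le> (\<Sum>j\<in>{1..n}. h j)"
    using ex_has_least_nat[of "\<lambda>h. h \<in> S" f\<^sub>0 "\<lambda>h. \<Sum>j\<in>{1..n}. h j"] assms(2) by metis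
  show thesis
  proof (rule that[OF f])
    fix h assume h: "h \<in> S" "gle n h f"
    show "h = f"
    proof (rule ccontr)
      assume "h \<noteq> f"
      then have "(\<Sum>j\<in>{1..n}. h j) < (\<Sum>j\<in>{1..n}. f j)"
        using assms(1) h f by (intro grid_sum_strict_mono) auto
      then show False using min[OF h(1)] by simp
    qed
  qed
qed

(* If y < x, then x covers y, and the other lower cover of x given by the UCTP lies below y. *)
lemma UCTP_twins_not_le:
  assumes "is_poset P le" "UCTP P le" "x \<in> P" "y \<in> P" "x \<noteq> y"
    and twins: "\<And>z. z \<in> P - {x, y} \<Longrightarrow> le z x \<longleftrightarrow> le z y"
  shows "\<not> le y x"
proof
  assume yx: "le y x"
  have "covers P le x y"
    unfolding covers_def
  proof (intro conjI)
    show "\<not> (\<exists>z\<in>P - {x, y}. le y z \<and> le z x)"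
    proof
      assume "\<exists>z\<in>P - {x, y}. le y z \<and> le z x"
      then obtain z where z: "z \<in> P - {x, y}" "le y z" "le z x" by blast
      then have "le z y" using twins by blast
      then have "z = y" using assms(1,4) z unfolding is_poset_def by blast
      then show False using z(1) by blast
    qed
  qed (use assms(3-5) yx in auto)
  then obtain y' where y': "y' \<in> P - {x, y}" "covers P le x y'"
    using assms(2-4) unfolding UCTP_def by blast
  then have "le y' y" using twins[of y'] unfolding covers_def by blast
  moreover have "y \<in> P - {x, y'}" using y'(1) assms(4,5) by blast
  ultimately show False using y'(2) yx unfolding covers_def by blast
qed

definition twin_over :: "nat \<Rightarrow> (nat \<Rightarrow> nat) set \<Rightarrow> (nat \<Rightarrow> nat) \<Rightarrow> (nat \<Rightarrow> nat) \<Rightarrow> bool" where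
  "twin_over n F f g \<longleftrightarrow> (\<forall>h\<in>F - {f}. (gle n h g \<longleftrightarrow> gle n h f) \<and> (gle n g h \<longleftrightarrow> gle n f h))"

lemma induced_copy_replace:
  assumes copy: "induced_copy P le n G \<phi>" and x: "x \<in> P" and f: "f \<notin> \<phi> ` P"
    and twin: "\<And>z. z \<in> P - {x} \<Longrightarrow>
      (gle n (\<phi> z) f \<longleftrightarrow> gle n (\<phi> z) (\<phi> x)) \<and> (gle n f (\<phi> z) \<longleftrightarrow> gle n (\<phi> x) (\<phi> z))"
  shows "induced_copy P le n (insert f (G - {\<phi> x})) (\<phi>(x := f))"
proof -
  have inj: "inj_on \<phi> P" and img: "\<phi> ` P \<subseteq> G"
    and ord: "\<And>y z. y \<in> P \<Longrightarrow> z \<in> P \<Longrightarrow> gle n (\<phi> y) (\<phi> z) \<longleftrightarrow> le y z"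
    using copy unfolding induced_copy_def by auto
  have "inj_on (\<phi>(x := f)) P"
    using inj f by (rule inj_on_fun_updI)
  moreover have "\<phi>(x := f) ` P \<subseteq> insert f (G - {\<phi> x})"
  proof (rule image_subsetI)
    fix z assume z: "z \<in> P"
    show "(\<phi>(x := f)) z \<in> insert f (G - {\<phi> x})"
    proof (cases "z = x")
      case False
      then have "\<phi> z \<noteq> \<phi> x" using inj_onD[OF inj _ z x] by blast
      then show ?thesis using img z False by auto
    qed simp
  qed
  moreover have "gle n ((\<phi>(x := f)) y) ((\<phi>(x := f)) z) \<longleftrightarrow> le y z" if "y \<in> P" "z \<in> P" for y z
  proof (cases "y = x"; cases "z = x")
    assume "y = x" "z = x"
    then show ?thesis using ord[OF x x] by (simp add: gle_refl)
  next
    assume "y = x" "z \<noteq> x"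
    then show ?thesis using ord[OF x that(2)] twin[of z] that by simp
  next
    assume "y \<noteq> x" "z = x"
    then show ?thesis using ord[OF that(1) x] twin[of y] that by simp
  next
    assume "y \<noteq> x" "z \<noteq> x"
    then show ?thesis using ord[OF that] by simp
  qed
  ultimately show ?thesis unfolding induced_copy_def by blast
qed

lemma induced_saturated_no_twin:
  assumes sat: "induced_saturated P le t n F" and "is_poset P le" "UCTP P le"
    and f: "f \<in> F" and g: "g \<in> grid t n - F"
    and comparable: "gle n f g \<or> gle n g f" and twin: "twin_over n F f g"
  shows False
proof -
  have free: "induced_free P le n F" using sat unfolding induced_saturated_def by blast
  obtain \<phi> where copy: "induced_copy P le n (F \<union> {g}) \<phi>"
    using sat g unfolding induced_saturated_def induced_free_def by blast
  have inj: "inj_on \<phi> P" and img: "\<phi> ` P \<subseteq> F \<union> {g}"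
    and ord: "\<And>y z. y \<in> P \<Longrightarrow> z \<in> P \<Longrightarrow> gle n (\<phi> y) (\<phi> z) \<longleftrightarrow> le y z"
    using copy unfolding induced_copy_def by auto
  have "g \<in> \<phi> ` P"
  proof (rule ccontr)
    assume "g \<notin> \<phi> ` P"
    then have "induced_copy P le n F \<phi>" using copy img unfolding induced_copy_def by blast
    then show False using free unfolding induced_free_def by blast
  qed
  then obtain x where x: "x \<in> P" "\<phi> x = g" by blast
  have others: "\<phi> z \<in> F" if z: "z \<in> P - {x}" for z
  proof -
    have "\<phi> z \<noteq> g" using inj_onD[OF inj, of z x] z x by auto
    then show ?thesis using img z by blast
  qed
  show False
  proof (cases "f \<in> \<phi> ` P")
    case False
    have "induced_copy P le n (insert f ((F \<union> {g}) - {\<phi> x})) (\<phi>(x := f))"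
      using copy x(1) False
    proof (rule induced_copy_replace)
      fix z assume z: "z \<in> P - {x}"
      then have "\<phi> z \<in> F - {f}" using others False by blast
      then show "(gle n (\<phi> z) f \<longleftrightarrow> gle n (\<phi> z) (\<phi> x)) \<and>
          (gle n f (\<phi> z) \<longleftrightarrow> gle n (\<phi> x) (\<phi> z))"
        using twin x(2) unfolding twin_over_def by simp
    qed
    moreover have "insert f ((F \<union> {g}) - {\<phi> x}) = F" using f g x(2) by blast
    ultimately show False using free unfolding induced_free_def by auto
  next
    case True
    then obtain y where y: "y \<in> P" "\<phi> y = f" by blast
    have "y \<noteq> x" using y x f g by blast
    have "le z x \<longleftrightarrow> le z y" if z: "z \<in> P - {x, y}" for z
    proof -
      have "\<phi> z \<noteq> f" using inj_onD[OF inj, of z y] z y by auto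
      then have "\<phi> z \<in> F - {f}" using others z by blast
      then have "gle n (\<phi> z) (\<phi> x) \<longleftrightarrow> gle n (\<phi> z) (\<phi> y)"
        using twin x(2) y(2) unfolding twin_over_def by simp
      then show ?thesis using ord[of z x] ord[of z y] x(1) y(1) z by simp
    qed
    then have "\<not> le y x" "\<not> le x y"
      using UCTP_twins_not_le[OF assms(2,3)] x(1) y(1) \<open>y \<noteq> x\<close> by blast+
    moreover have "le y x \<or> le x y"
      using comparable ord[OF x(1) y(1)] ord[OF y(1) x(1)] x(2) y(2) by simp
    ultimately show False by blast
  qed
qed

lemma induced_saturated_nonempty:
  assumes sat: "induced_saturated P le t n F" and "card P \<ge> 2" "t \<ge> 1"
  shows "F \<noteq> {}"
proof
  assume F: "F = {}"
  define g :: "nat \<Rightarrow> nat" where "g = (\<lambda>x. if x \<in> {1..n} then 1 else 0)"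
  have "g \<in> grid t n" using assms(3) by (auto simp: g_def grid_def)
  then have "\<not> induced_free P le n {g}" using sat F unfolding induced_saturated_def by simp
  then obtain \<phi> where "induced_copy P le n {g} \<phi>" unfolding induced_free_def by blast
  then have "inj_on \<phi> P" "\<phi> ` P \<subseteq> {g}" unfolding induced_copy_def by simp_all
  then have "card P \<le> card {g}" by (intro card_inj_on_le) simp_all
  then show False using assms(2) by simp
qed

lemma not_separating_coord_le:
  assumes "\<not> separating n F i" "f \<in> F" "h \<in> F" "f \<noteq> h"
    and "gle (n - 1) (del_coord n i f) (del_coord n i h)"
  shows "f i \<le> h i"
  using assms unfolding separating_def by (meson not_le)

lemma fun_upd_notin_if_not_separating:
  assumes ns: "\<not> separating n F i" and i: "i \<in> {1..n}" and f: "f \<in> F" and c: "c \<noteq> f i"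
  shows "f(i := c) \<notin> F"
proof
  assume g: "f(i := c) \<in> F"
  have "f(i := c) \<noteq> f" using c by (metis fun_upd_same)
  moreover have "del_coord n i (f(i := c)) = del_coord n i f"
    using i by (rule del_coord_fun_upd)
  ultimately have "c \<le> f i" "f i \<le> c"
    using not_separating_coord_le[OF ns g f] not_separating_coord_le[OF ns f g] gle_refl by auto
  then show False using c by simp
qed

lemma twin_over_fun_upd_if_not_separating:
  assumes ns: "\<not> separating n F i" and i: "i \<in> {1..n}" and f: "f \<in> F"
    and below: "\<And>h. h \<in> F - {f} \<Longrightarrow> gle n h f \<Longrightarrow> h i \<le> c"
    and above: "\<And>h. h \<in> F - {f} \<Longrightarrow> gle n f h \<Longrightarrow> c \<le> h i"
  shows "twin_over n F f (f(i := c))"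
  unfolding twin_over_def
proof
  fix h assume h: "h \<in> F - {f}"
  let ?D = "del_coord n i"
  have D: "?D (f(i := c)) = ?D f" using i by (rule del_coord_fun_upd)
  have down: "gle (n - 1) (?D h) (?D f) \<Longrightarrow> h i \<le> f i"
    and up: "gle (n - 1) (?D f) (?D h) \<Longrightarrow> f i \<le> h i"
    using not_separating_coord_le[OF ns] f h by auto
  show "(gle n h (f(i := c)) \<longleftrightarrow> gle n h f) \<and> (gle n (f(i := c)) h \<longleftrightarrow> gle n f h)"
    using gle_iff_del_coord[OF i] D down up below[OF h] above[OF h] by auto
qed

lemma exists_gap_at_coordinate:
  assumes F: "F \<subseteq> grid t n" and "f\<^sub>0 \<in> F" and i: "i \<in> {1..n}" and "t \<ge> 2"
  obtains f c where "f \<in> F" "1 \<le> c" "c \<le> t" "c \<noteq> f i"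
    "\<And>h. h \<in> F - {f} \<Longrightarrow> gle n h f \<Longrightarrow> h i \<le> c"
    "\<And>h. h \<in> F - {f} \<Longrightarrow> gle n f h \<Longrightarrow> c \<le> h i"
proof -
  define S where "S = {h \<in> F. h i = f\<^sub>0 i}"
  have S: "S \<subseteq> grid t n" "f\<^sub>0 \<in> S" using F assms(2) by (auto simp: S_def)
  have range: "1 \<le> f\<^sub>0 i" "f\<^sub>0 i \<le> t" using F assms(2) i by (auto simp: grid_def)
  have coord_le: "h i \<le> h' i" if "gle n h h'" for h h' using that i by (simp add: gle_def)
  show thesis
  proof (cases "f\<^sub>0 i < t")
    case True
    obtain f where f: "f \<in> S" and max: "\<And>h. h \<in> S \<Longrightarrow> gle n f h \<Longrightarrow> h = f"
      using grid_has_maximal[OF S] by blast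
    have fi: "f \<in> F" "f i = f\<^sub>0 i" using f by (simp_all add: S_def)
    show thesis
    proof (rule that[of f "f\<^sub>0 i + 1"])
      fix h assume "h \<in> F - {f}" "gle n h f"
      then show "h i \<le> f\<^sub>0 i + 1" using coord_le fi by fastforce
    next
      fix h assume h: "h \<in> F - {f}" "gle n f h"
      then have "h i \<noteq> f\<^sub>0 i" using max S_def by blast
      then show "f\<^sub>0 i + 1 \<le> h i" using coord_le[OF h(2)] fi by simp
    qed (use fi True in auto)
  next
    case False
    obtain f where f: "f \<in> S" and min: "\<And>h. h \<in> S \<Longrightarrow> gle n h f \<Longrightarrow> h = f"
      using grid_has_minimal[OF S] by blast
    have fi: "f \<in> F" "f i = f\<^sub>0 i" using f by (simp_all add: S_def)
    show thesis
    proof (rule that[of f "f\<^sub>0 i - 1"])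
      fix h assume h: "h \<in> F - {f}" "gle n h f"
      then have "h i \<noteq> f\<^sub>0 i" using min S_def by blast
      then show "h i \<le> f\<^sub>0 i - 1" using coord_le[OF h(2)] fi by simp
    next
      fix h assume "h \<in> F - {f}" "gle n f h"
      then show "f\<^sub>0 i - 1 \<le> h i" using coord_le fi by fastforce
    qed (use fi False range assms(4) in auto)
  qed
qed

theorem mainTheorem9:
  fixes t n :: nat and P :: "'a set" and le :: "'a \<Rightarrow> 'a \<Rightarrow> bool"
    and F :: "(nat \<Rightarrow> nat) set"
  assumes "t \<ge> 2" and "n \<ge> 1"
    and "finite P" and "is_poset P le" and "UCTP P le" and "card P \<ge> 3"
    and "induced_saturated P le t n F"
  shows "\<forall>i\<in>{1..n}. separating n F i"
proof (intro ballI, rule ccontr)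
  fix i assume i: "i \<in> {1..n}" and ns: "\<not> separating n F i"
  have F: "F \<subseteq> grid t n" using assms(7) unfolding induced_saturated_def by blast
  obtain f\<^sub>0 where "f\<^sub>0 \<in> F"
    using induced_saturated_nonempty[OF assms(7)] assms(1,6) by fastforce
  then obtain f c where f: "f \<in> F" and c: "1 \<le> c" "c \<le> t" "c \<noteq> f i"
    and below: "\<And>h. h \<in> F - {f} \<Longrightarrow> gle n h f \<Longrightarrow> h i \<le> c"
    and above: "\<And>h. h \<in> F - {f} \<Longrightarrow> gle n f h \<Longrightarrow> c \<le> h i"
    using exists_gap_at_coordinate[OF F _ i assms(1)] by blast
  have "f(i := c) \<in> grid t n - F"
    using fun_upd_in_grid[OF subsetD[OF F f] i c(1,2)]
      fun_upd_notin_if_not_separating[OF ns i f c(3)] by blast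
  moreover have "twin_over n F f (f(i := c))"
    using ns i f below above by (rule twin_over_fun_upd_if_not_separating)
  ultimately show False
    using induced_saturated_no_twin[OF assms(7,4,5) f] gle_fun_upd_comparable by blast
qed

end
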